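(* Let $O$ be the origin of $\mathbb{R}^3$ and $R>0$. Let $x:[0,\tau_1]\to\mathbb{R}^3$ be a twice continuously differentiable trajectory with nowhere-vanishing velocity $\dot x(\tau)\neq 0$, satisfying the central-attraction equation $\ddot x(\tau) = -\kappa(\tau)\,x(\tau)$ with $\kappa(\tau)>0$ for all $\tau$. Let $A=x(0)$ with $|A|<R$, and suppose the trajectory reaches the sphere $\{|p|=R\}$, with $B = x(\tau_B)$ the first point where $|x(\tau)|=R$. Let $d=\dot x(0)/|\dot x(0)|$ be the initial direction, and let $P = A + t^\ast d$, where $t^\ast>0$ is the unique positive number with $|A+t^\ast d| = R$. Let $L_{AB}=\int_0^{\tau_B}|\dot x(\tau)|\,d\tau$ be the arclength of the trajectory from $A$ to $B$. Then $$L_{AB}\ \geq\ |AP|.$$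
   Context: This models a light ray in the near-field ball of radius $R$ around a black hole centered at $O$, with gravity approximated by Newtonian attraction toward the center, so that the acceleration is always directed toward $O$ and bends the path toward the center. $|AP|$ denotes the Euclidean distance between $A$ and $P$. *)

theory Defs
  imports "HOL-Analysis.Analysis"
begin

end

theory Submission
  imports Defs
begin

(* Let E(t) be the distance from x(t), along the current direction of motion, to the sphere
   of radius R.  Since the attraction is central, the component x . v/|v| of the position along
   the direction of motion grows no faster than the speed |v|, and therefore E decreases no faster
   than |v|: E plus arclength is nondecreasing.  At A, E = |AP|; at the first exit point B the
   motion points outward, so E = 0.  Hence L_AB >= |AP|. *)

(* The larger root t of |p + t d|^2 = R^2 for a unit vector d. *)
definition exit_distance :: "real \<Rightarrow> 'a::real_inner \<Rightarrow> 'a \<Rightarrow> real" where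
  "exit_distance R p d = - (p \<bullet> d) + sqrt ((p \<bullet> d)\<^sup>2 + R\<^sup>2 - (norm p)\<^sup>2)"

lemma exit_distance_eqI:
  fixes p d :: "'a::real_inner"
  assumes "norm d = 1" "norm p \<le> R" "t > 0" "norm (p + t *\<^sub>R d) = R"
  shows "exit_distance R p d = t"
proof -
  define S where "S = sqrt ((p \<bullet> d)\<^sup>2 + R\<^sup>2 - (norm p)\<^sup>2)"
  have "d \<bullet> d = 1" using assms(1) by (simp add: norm_eq_1)
  then have "R\<^sup>2 = (norm p)\<^sup>2 + 2 * t * (p \<bullet> d) + t\<^sup>2"
    unfolding assms(4)[symmetric] power2_norm_eq_inner
    by (simp add: inner_add_left inner_add_right inner_commute[of d p] power2_eq_square algebra_simps)
  then have "\<bar>t + p \<bullet> d\<bar> = S"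
    unfolding S_def by (simp flip: real_sqrt_abs add: power2_sum algebra_simps)
  moreover have "\<bar>p \<bullet> d\<bar> \<le> S"
    unfolding S_def using assms(2) norm_ge_zero[of p]
    by (intro real_le_rsqrt) (simp add: power_mono)
  ultimately have "t + p \<bullet> d = S" using assms(3) by linarith
  then show ?thesis unfolding exit_distance_def S_def by linarith
qed

lemma exit_distance_outward_on_sphere:
  assumes "norm p = R" "p \<bullet> d \<ge> 0"
  shows "exit_distance R p d = 0"
  using assms by (simp add: exit_distance_def)

lemma has_real_derivative_inner:
  fixes f g :: "real \<Rightarrow> 'a::real_inner"
  assumes "(f has_vector_derivative f') (at t within S)" "(g has_vector_derivative g') (at t within S)"
  shows "((\<lambda>s. f s \<bullet> g s) has_real_derivative f t \<bullet> g' + f' \<bullet> g t) (at t within S)"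
  using has_derivative_inner[OF assms[unfolded has_vector_derivative_def]]
  unfolding has_field_derivative_def
  by (rule has_derivative_eq_rhs) (auto simp: algebra_simps)

lemma has_real_derivative_exit_root_ge:
  fixes p r :: "real \<Rightarrow> real"
  assumes p: "(p has_real_derivative p') (at t within S)"
    and r: "(r has_real_derivative 2 * p t * n) (at t within S)"
    and "p' \<le> n" "r t < R\<^sup>2"
  shows "\<exists>D. ((\<lambda>s. - p s + sqrt ((p s)\<^sup>2 + R\<^sup>2 - r s)) has_real_derivative D) (at t within S)
           \<and> - n \<le> D"
proof -
  define Q where "Q = (p t)\<^sup>2 + R\<^sup>2 - r t"
  have "(p t)\<^sup>2 < Q" using assms(4) by (simp add: Q_def)
  then have S_gt: "\<bar>p t\<bar> < sqrt Q"
    using real_sqrt_less_mono[of "(p t)\<^sup>2" Q] by simp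
  then have Q_pos: "Q > 0" using abs_ge_zero[of "p t"] real_sqrt_gt_0_iff[of Q] by linarith
  have radicand: "((\<lambda>s. (p s)\<^sup>2 + R\<^sup>2 - r s) has_real_derivative 2 * p t * p' - 2 * p t * n)
      (at t within S)"
    by (rule derivative_eq_intros p r refl)+ simp
  define D where "D = - p' + inverse (sqrt Q) / 2 * (2 * p t * p' - 2 * p t * n)"
  have "((\<lambda>s. - p s + sqrt ((p s)\<^sup>2 + R\<^sup>2 - r s)) has_real_derivative D) (at t within S)"
    unfolding D_def Q_def
    by (rule DERIV_add[OF DERIV_minus[OF p] DERIV_chain2[OF DERIV_real_sqrt radicand]])
      (use Q_pos in \<open>simp add: Q_def\<close>)
  moreover have "D = - n + (n - p') * (1 - p t / sqrt Q)"
    using Q_pos by (simp add: D_def field_simps)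
  moreover have "p t / sqrt Q \<le> 1" using S_gt Q_pos by simp
  ultimately show ?thesis using assms(3) by (intro exI[of _ D]) simp
qed

lemma has_real_derivative_norm:
  fixes f :: "real \<Rightarrow> 'a::real_inner"
  assumes "(f has_vector_derivative f') (at t within S)" "f t \<noteq> 0"
  shows "((\<lambda>s. norm (f s)) has_real_derivative sgn (f t) \<bullet> f') (at t within S)"
  using has_derivative_compose[OF assms(1)[unfolded has_vector_derivative_def]
      has_derivative_norm[OF assms(2)]]
  unfolding has_field_derivative_def
  by (rule has_derivative_eq_rhs) (auto simp: algebra_simps inner_commute)

lemma central_attraction_direction_deriv_le_speed:
  fixes x v :: "real \<Rightarrow> 'a::real_inner"
  assumes x: "(x has_vector_derivative v t) (at t within S)"
    and v: "(v has_vector_derivative - \<kappa> *\<^sub>R x t) (at t within S)"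
    and "\<kappa> \<ge> 0" "v t \<noteq> 0"
  shows "\<exists>D. ((\<lambda>s. x s \<bullet> sgn (v s)) has_real_derivative D) (at t within S) \<and> D \<le> norm (v t)"
proof -
  define n where "n = norm (v t)"
  define q where "q = x t \<bullet> v t"
  have n_pos: "n > 0" using assms(4) by (simp add: n_def)
  have "((\<lambda>s. x s \<bullet> v s) has_real_derivative n\<^sup>2 - \<kappa> * (norm (x t))\<^sup>2) (at t within S)"
    using has_real_derivative_inner[OF x v]
    by (simp add: n_def power2_norm_eq_inner)
  moreover have "((\<lambda>s. norm (v s)) has_real_derivative - \<kappa> * q / n) (at t within S)"
    using has_real_derivative_norm[OF v assms(4)]
    by (simp add: sgn_div_norm q_def n_def inner_commute divide_inverse_commute)
  ultimately have "((\<lambda>s. (x s \<bullet> v s) / norm (v s)) has_real_derivative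
      ((n\<^sup>2 - \<kappa> * (norm (x t))\<^sup>2) * n - q * (- \<kappa> * q / n)) / (n * n)) (at t within S)"
    unfolding n_def q_def by (rule DERIV_divide) (use assms(4) in auto)
  moreover have "(\<lambda>s. (x s \<bullet> v s) / norm (v s)) = (\<lambda>s. x s \<bullet> sgn (v s))"
    by (simp add: sgn_div_norm divide_inverse_commute)
  moreover have "((n\<^sup>2 - \<kappa> * (norm (x t))\<^sup>2) * n - q * (- \<kappa> * q / n)) / (n * n)
      = n - \<kappa> * ((norm (x t) * n)\<^sup>2 - q\<^sup>2) / n ^ 3"
    using n_pos by (simp add: field_simps power2_eq_square power3_eq_cube)
  moreover have "q\<^sup>2 \<le> (norm (x t) * n)\<^sup>2"
    using Cauchy_Schwarz_ineq2[of "x t" "v t"] unfolding q_def n_def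
    by (metis abs_ge_zero power2_abs power_mono)
  ultimately show ?thesis
    using assms(3) n_pos by (intro exI[of _ "n - \<kappa> * ((norm (x t) * n)\<^sup>2 - q\<^sup>2) / n ^ 3"])
      (simp add: n_def)
qed

lemma exit_distance_deriv_ge_neg_speed:
  fixes x v :: "real \<Rightarrow> 'a::real_inner"
  assumes x: "(x has_vector_derivative v t) (at t within S)"
    and v: "(v has_vector_derivative - \<kappa> *\<^sub>R x t) (at t within S)"
    and "\<kappa> \<ge> 0" "v t \<noteq> 0" "norm (x t) < R"
  shows "\<exists>D. ((\<lambda>s. exit_distance R (x s) (sgn (v s))) has_real_derivative D) (at t within S)
           \<and> - norm (v t) \<le> D"
proof -
  obtain p' where p': "((\<lambda>s. x s \<bullet> sgn (v s)) has_real_derivative p') (at t within S)"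
    and p'_le: "p' \<le> norm (v t)"
    using central_attraction_direction_deriv_le_speed[OF x v assms(3,4)] by blast
  have r: "((\<lambda>s. (norm (x s))\<^sup>2) has_real_derivative 2 * (x t \<bullet> sgn (v t)) * norm (v t))
      (at t within S)"
    using has_real_derivative_inner[OF x x] assms(4)
    by (simp add: power2_norm_eq_inner sgn_div_norm inner_commute field_simps)
  have "(norm (x t))\<^sup>2 < R\<^sup>2"
    using assms(5) by (simp add: power_strict_mono)
  then show ?thesis
    unfolding exit_distance_def by (rule has_real_derivative_exit_root_ge[OF p' r p'_le])
qed

lemma exit_distance_le_plus_arclength:
  fixes x v :: "real \<Rightarrow> 'a::real_inner" and \<kappa> :: "real \<Rightarrow> real"
  assumes "a \<le> b"
    and x: "\<And>t. t \<in> {a..b} \<Longrightarrow> (x has_vector_derivative v t) (at t within {a..b})"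
    and v: "\<And>t. t \<in> {a..b} \<Longrightarrow> (v has_vector_derivative - \<kappa> t *\<^sub>R x t) (at t within {a..b})"
    and \<kappa>: "\<And>t. t \<in> {a..b} \<Longrightarrow> \<kappa> t \<ge> 0"
    and v_nonzero: "\<And>t. t \<in> {a..b} \<Longrightarrow> v t \<noteq> 0"
    and inside: "\<And>t. t \<in> {a<..<b} \<Longrightarrow> norm (x t) < R"
  shows "exit_distance R (x a) (sgn (v a))
           \<le> exit_distance R (x b) (sgn (v b)) + integral {a..b} (\<lambda>t. norm (v t))"
proof -
  define F where
    "F t = exit_distance R (x t) (sgn (v t)) + integral {a..t} (\<lambda>s. norm (v s))" for t
  have cx: "continuous_on {a..b} x" by (rule continuous_on_vector_derivative[OF x])
  have cv: "continuous_on {a..b} v" by (rule continuous_on_vector_derivative[OF v])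
  have speed_cont: "continuous_on {a..b} (\<lambda>t. norm (v t))"
    using cv by (intro continuous_intros)
  have "F a \<le> F b"
  proof (rule DERIV_nonneg_imp_increasing_open[OF \<open>a \<le> b\<close>])
    fix t assume "a < t" "t < b"
    then have t: "t \<in> {a..b}" and at_t: "at t within {a..b} = at t"
      by (auto intro: at_within_interior)
    obtain D where D: "((\<lambda>s. exit_distance R (x s) (sgn (v s))) has_real_derivative D) (at t)"
      and D_ge: "- norm (v t) \<le> D"
      using exit_distance_deriv_ge_neg_speed[OF x[OF t] v[OF t] \<kappa>[OF t] v_nonzero[OF t]]
        inside \<open>a < t\<close> \<open>t < b\<close> at_t by auto
    have "((\<lambda>u. integral {a..u} (\<lambda>s. norm (v s))) has_real_derivative norm (v t)) (at t)"
      using integral_has_vector_derivative[OF speed_cont t] at_t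
      by (simp add: has_real_derivative_iff_has_vector_derivative)
    then have "(F has_real_derivative D + norm (v t)) (at t)"
      unfolding F_def[abs_def] by (rule DERIV_add[OF D])
    then show "\<exists>y. (F has_real_derivative y) (at t) \<and> 0 \<le> y"
      using D_ge by (intro exI conjI) auto
  next
    show "continuous_on {a..b} F"
      unfolding F_def[abs_def] exit_distance_def
      by (intro continuous_intros cx cv indefinite_integral_continuous_1
          integrable_continuous_real speed_cont) (use v_nonzero in auto)
  qed
  then show ?thesis by (simp add: F_def)
qed

lemma continuous_on_less_before_first_hit:
  fixes f :: "real \<Rightarrow> real"
  assumes "continuous_on {a..b} f" "f a < c" "\<And>s. s \<in> {a..<b} \<Longrightarrow> f s \<noteq> c"
    and "t \<in> {a..<b}"
  shows "f t < c"
proof (rule ccontr)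
  assume "\<not> f t < c"
  moreover have "continuous_on {a..t} f"
    using assms(1) by (rule continuous_on_subset) (use assms(4) in auto)
  ultimately obtain s where "a \<le> s" "s \<le> t" "f s = c"
    using IVT'[of f a c t] assms(2,4) by auto
  then show False using assms(3,4) by auto
qed

lemma DERIV_nonneg_at_right_endpoint_max:
  fixes f :: "real \<Rightarrow> real"
  assumes "(f has_real_derivative D) (at b within {a..b})" "a < b"
    and "\<And>s. s \<in> {a..b} \<Longrightarrow> f s \<le> f b"
  shows "0 \<le> D"
proof (rule tendsto_lowerbound)
  show "((\<lambda>s. (f s - f b) / (s - b)) \<longlongrightarrow> D) (at b within {a..b})"
    using assms(1) by (simp add: has_field_derivative_iff)
  show "\<forall>\<^sub>F s in at b within {a..b}. 0 \<le> (f s - f b) / (s - b)"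
    unfolding eventually_at_filter
    by (intro always_eventually) (auto intro: divide_nonpos_neg simp: assms(3))
  show "at b within {a..b} \<noteq> bot"
    using assms(2) by (simp add: trivial_limit_within islimpt_Icc)
qed

lemma inner_velocity_nonneg_at_norm_max:
  fixes x v :: "real \<Rightarrow> 'a::real_inner"
  assumes "a < b" "\<And>t. t \<in> {a..b} \<Longrightarrow> (x has_vector_derivative v t) (at t within {a..b})"
    and "\<And>t. t \<in> {a..b} \<Longrightarrow> norm (x t) \<le> norm (x b)"
  shows "0 \<le> x b \<bullet> v b"
proof -
  have "0 \<le> 2 * (x b \<bullet> v b)"
  proof (rule DERIV_nonneg_at_right_endpoint_max[OF _ \<open>a < b\<close>])
    show "((\<lambda>t. x t \<bullet> x t) has_real_derivative 2 * (x b \<bullet> v b)) (at b within {a..b})"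
      using has_real_derivative_inner[OF assms(2) assms(2)] \<open>a < b\<close> by (simp add: inner_commute)
    show "x t \<bullet> x t \<le> x b \<bullet> x b" if "t \<in> {a..b}" for t
      using assms(3)[OF that] by (simp flip: power2_norm_eq_inner add: power_mono)
  qed
  then show ?thesis by simp
qed

theorem proposition1:
  fixes x v a :: "real \<Rightarrow> real ^ 3"
    and \<kappa> :: "real \<Rightarrow> real"
    and R \<tau>1 \<tau>B tstar :: real
  assumes R_pos: "R > 0"
    and x_deriv: "\<And>t. t \<in> {0..\<tau>1} \<Longrightarrow> (x has_vector_derivative v t) (at t within {0..\<tau>1})"
    and v_deriv: "\<And>t. t \<in> {0..\<tau>1} \<Longrightarrow> (v has_vector_derivative a t) (at t within {0..\<tau>1})"
    and a_cont: "continuous_on {0..\<tau>1} a"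
    and v_nonzero: "\<And>t. t \<in> {0..\<tau>1} \<Longrightarrow> v t \<noteq> 0"
    and central: "\<And>t. t \<in> {0..\<tau>1} \<Longrightarrow> a t = - (\<kappa> t) *\<^sub>R x t"
    and kappa_pos: "\<And>t. t \<in> {0..\<tau>1} \<Longrightarrow> \<kappa> t > 0"
    and A_inside: "norm (x 0) < R"
    and tauB_range: "\<tau>B \<in> {0..\<tau>1}"
    and B_on_sphere: "norm (x \<tau>B) = R"
    and B_first: "\<And>t. t \<in> {0..<\<tau>B} \<Longrightarrow> norm (x t) \<noteq> R"
    and tstar_pos: "tstar > 0"
    and P_on_sphere: "norm (x 0 + tstar *\<^sub>R (v 0 /\<^sub>R norm (v 0))) = R"
  shows "integral {0..\<tau>B} (\<lambda>t. norm (v t))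
           \<ge> dist (x 0) (x 0 + tstar *\<^sub>R (v 0 /\<^sub>R norm (v 0)))"
proof -
  have sub: "{0..\<tau>B} \<subseteq> {0..\<tau>1}" using tauB_range by auto
  have x': "\<And>t. t \<in> {0..\<tau>B} \<Longrightarrow> (x has_vector_derivative v t) (at t within {0..\<tau>B})"
    using x_deriv sub by (blast intro: has_vector_derivative_within_subset)
  have v': "\<And>t. t \<in> {0..\<tau>B} \<Longrightarrow> (v has_vector_derivative - \<kappa> t *\<^sub>R x t) (at t within {0..\<tau>B})"
    using v_deriv central sub by (metis has_vector_derivative_within_subset subsetD)
  have tauB_pos: "\<tau>B > 0" using tauB_range A_inside B_on_sphere by (cases "\<tau>B = 0") auto
  have inside: "norm (x t) < R" if "t \<in> {0..<\<tau>B}" for t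
    using continuous_on_less_before_first_hit[of 0 \<tau>B "\<lambda>t. norm (x t)"] that A_inside B_first
      continuous_on_vector_derivative[OF x'] by (auto intro: continuous_on_norm)
  have "norm (x t) \<le> norm (x \<tau>B)" if "t \<in> {0..\<tau>B}" for t
    using inside[of t] that B_on_sphere by (cases "t = \<tau>B") auto
  then have "0 \<le> x \<tau>B \<bullet> v \<tau>B" using inner_velocity_nonneg_at_norm_max[OF tauB_pos x'] by blast
  then have exit_B: "exit_distance R (x \<tau>B) (sgn (v \<tau>B)) = 0"
    by (intro exit_distance_outward_on_sphere B_on_sphere) (simp add: sgn_div_norm)
  have v0: "v 0 \<noteq> 0" using v_nonzero tauB_range by auto
  have exit_0: "exit_distance R (x 0) (sgn (v 0)) = tstar"
    using exit_distance_eqI[OF _ _ tstar_pos P_on_sphere] A_inside v0 by (simp add: sgn_div_norm)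
  have "exit_distance R (x 0) (sgn (v 0))
          \<le> exit_distance R (x \<tau>B) (sgn (v \<tau>B)) + integral {0..\<tau>B} (\<lambda>t. norm (v t))"
    by (rule exit_distance_le_plus_arclength[OF _ x' v'])
      (use tauB_range kappa_pos v_nonzero inside sub in \<open>auto simp: less_imp_le\<close>)
  moreover have "dist (x 0) (x 0 + tstar *\<^sub>R (v 0 /\<^sub>R norm (v 0))) = tstar"
    using v0 tstar_pos by (simp add: dist_norm)
  ultimately show ?thesis using exit_0 exit_B by simp
qed

end
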